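(* Let $n_0$ be a positive integer and let $X$ be a semiprime complex Banach algebra with identity. Let $\phi,\psi:X^2\to[0,\infty)$ and $f:X\to X$ with $f(0)=0$ satisfy $$\|f(xyx)-f(x)yx-xf(y)x-xyf(x)\|\le\psi(x,y),$$ $$\|f(2\mu x+\mu y)+f(\mu x+2\mu y)-\mu[f(3x)+f(3y)]\|\le\phi(x,y)$$ for all $x,y\in X$ and all $\mu\in\mathbb{T}^1_{n_0}$. Assume there exists $0<L<1$ such that for all $x,y\in X$ $$\tfrac12\phi(2x,2y)\le L\phi(x,y),\qquad \lim_{k\to\infty}8^{-k}\psi(2^kx,2^ky)=0,\qquad \lim_{k\to\infty}4^{-k}\psi(2^kx,y)=0.$$ Then $f$ is a linear derivation.
   Context: $\mathbb{T}^1_{n_0}:=\{e^{i\theta}: 0\le\theta\le 2\pi/n_0\}$. An algebra $X$ is semiprime if $aXa=\{0\}$ for some $a\in X$ implies $a=0$. A linear derivation is a $\mathbb{C}$-linear map $D:X\to X$ with $D(xy)=D(x)y+xD(y)$ for all $x,y\in X$. *)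

theory Defs
  imports "HOL-Analysis.Analysis"
begin

class scaleC =
  fixes scaleC :: "complex \<Rightarrow> 'a \<Rightarrow> 'a" (infixr \<open>*\<^sub>C\<close> 75)

class complex_banach_algebra_1 = real_normed_algebra_1 + banach + scaleC +
  assumes scaleC_add_right: "c *\<^sub>C (x + y) = c *\<^sub>C x + c *\<^sub>C y"
    and scaleC_add_left: "(a + b) *\<^sub>C x = a *\<^sub>C x + b *\<^sub>C x"
    and scaleC_scaleC: "a *\<^sub>C (b *\<^sub>C x) = (a * b) *\<^sub>C x"
    and scaleC_one: "1 *\<^sub>C x = x"
    and scaleC_of_real: "(complex_of_real r) *\<^sub>C x = r *\<^sub>R x"
    and norm_scaleC: "norm (c *\<^sub>C x) = cmod c * norm x"
    and scaleC_left_mult: "(c *\<^sub>C x) * y = c *\<^sub>C (x * y)"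
    and scaleC_right_mult: "x * (c *\<^sub>C y) = c *\<^sub>C (x * y)"

definition arcT :: "nat \<Rightarrow> complex set" where
  "arcT n0 = {cis \<theta> | \<theta>. 0 \<le> \<theta> \<and> \<theta> \<le> 2 * pi / real n0}"

definition semiprime :: "'a::ring itself \<Rightarrow> bool" where
  "semiprime _ \<longleftrightarrow> (\<forall>a::'a. (\<forall>x::'a. a * x * a = 0) \<longrightarrow> a = 0)"

definition linear_derivation :: "('a::complex_banach_algebra_1 \<Rightarrow> 'a) \<Rightarrow> bool" where
  "linear_derivation D \<longleftrightarrow>
     (\<forall>x y. D (x + y) = D x + D y) \<and> (\<forall>c x. D (c *\<^sub>C x) = c *\<^sub>C D x) \<and>
     (\<forall>x y. D (x * y) = D x * y + x * D y)"

end

(*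
  Hyers' direct method: the functional inequality makes x \<mapsto> 2^-k f (2^k x) a Cauchy sequence,
  whose limit D satisfies the functional equation exactly.  Hence D is additive and, because it
  commutes with the scalars of the arc, complex linear.  The 8^k decay of \<psi> makes D a Jordan
  triple derivation, and the 4^k decay, evaluated at x = 1, shows that D = f.  Finally, on a
  2-torsion-free semiprime ring an additive Jordan triple derivation is a derivation (Bresar):
  the defect D(xy) - D(x) y - x D(y) annihilates every commutator from both sides, is central
  and nilpotent, hence zero.
*)

theory Submission
  imports Defs
begin

section \<open>Jordan triple derivations of semiprime rings\<close>

locale jordan_triple_derivation = additive D for D :: "'a::ring_1 \<Rightarrow> 'a" +
  assumes semiprime: "semiprime TYPE('a)"
    and two_torsion_free: "\<And>x::'a. x + x = 0 \<Longrightarrow> x = 0"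
    and triple: "\<And>x y. D (x * y * x) = D x * y * x + x * D y * x + x * y * D x"
begin

lemma semiprimeD: "a = 0" if "\<And>x. a * x * a = 0" for a :: 'a
  using semiprime that unfolding semiprime_def by blast

lemma sandwich_anticommute_zero:
  fixes a b :: 'a
  assumes "\<And>w. a * w * b + b * w * a = 0"
  shows "a * x * b = 0"
proof (rule semiprimeD)
  fix y
  have swap: "b * w * a = - (a * w * b)" for w
    using assms[of w] by (simp add: eq_neg_iff_add_eq_0 add.commute)
  have "a*x*b*y*(a*x*b) = a*x*(b*y*a)*x*b" by (simp add: mult.assoc)
  also have "\<dots> = - ((a*(x*a*y)*b)*x*b)" by (simp only: swap[of y]) (simp add: mult.assoc)
  also have "\<dots> = (b*(x*a*y)*a)*x*b" by (simp add: swap)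
  also have "\<dots> = (b*x*a)*y*(a*x*b)" by (simp add: mult.assoc)
  also have "\<dots> = - (a*x*b*y*(a*x*b))" by (simp add: swap)
  finally have "a*x*b*y*(a*x*b) + a*x*b*y*(a*x*b) = 0"
    by (simp add: eq_neg_iff_add_eq_0)
  then show "a*x*b*y*(a*x*b) = 0" by (rule two_torsion_free)
qed

lemma sandwich_cross_zero:
  fixes a a' c c' :: 'a
  assumes "\<And>w. a * w * c = 0" and "\<And>w. a' * w * c' = 0"
    and "\<And>w. (a + a') * w * (c + c') = 0"
  shows "a * w * c' = 0"
proof (rule semiprimeD)
  fix r
  have "a * w * c' = - (a' * w * c)"
    using assms(3)[of w] assms(1)[of w] assms(2)[of w]
    by (simp add: algebra_simps eq_neg_iff_add_eq_0)
  then have "a*w*c' * r * (a*w*c') = a*w*c' * r * (- (a'*w*c))"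
    by simp
  also have "\<dots> = - (a * (w*c'*r*a'*w) * c)"
    by (simp add: mult.assoc)
  finally have "a*w*c' * r * (a*w*c') = - (a * (w*c'*r*a'*w) * c)" .
  then show "a*w*c' * r * (a*w*c') = 0"
    by (simp add: assms(1))
qed

lemma central_nilpotent_zero:
  fixes a :: 'a
  assumes central: "\<And>r. r * a = a * r" and cube: "a * a * a = 0"
  shows "a = 0"
proof -
  have square: "a * a = 0"
  proof (rule semiprimeD)
    fix r
    have "a * a * r * (a * a) = a * a * (r * a) * a" by (simp only: mult.assoc)
    also have "\<dots> = a * a * (a * r) * a" using central by (rule arg_cong)
    also have "\<dots> = a * a * a * r * a" by (simp only: mult.assoc)
    finally show "a * a * r * (a * a) = 0" by (simp add: cube)
  qed
  show ?thesis
  proof (rule semiprimeD)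
    fix r
    have "a * r * a = a * (r * a)" by (simp only: mult.assoc)
    also have "\<dots> = a * (a * r)" using central by (rule arg_cong)
    finally show "a * r * a = 0" by (simp add: square mult.assoc[symmetric])
  qed
qed

lemma one: "D 1 = 0"
proof (rule two_torsion_free)
  have "D 1 + (D 1 + D 1) = D 1 + 0"
    using triple[of 1 1] by (simp add: add.assoc)
  then show "D 1 + D 1 = 0" by (rule add_left_imp_eq)
qed

lemma triple_linearized:
  "D (x*y*z + z*y*x) = D x*y*z + x*D y*z + x*y*D z + D z*y*x + z*D y*x + z*y*D x"
proof -
  have "x*y*z + z*y*x = (x+z)*y*(x+z) - x*y*x - z*y*z"
    by (simp add: algebra_simps)
  then show ?thesis
    by (simp only: diff triple) (simp add: add algebra_simps)
qed

lemma jordan: "D (x*z + z*x) = D x*z + x*D z + D z*x + z*D x"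
  using triple_linearized[of x 1 z] one by simp

definition defect :: "'a \<Rightarrow> 'a \<Rightarrow> 'a" where
  "defect x y = D (x * y) - D x * y - x * D y"

lemma defect_skew: "defect y x = - defect x y"
  using jordan[of x y] unfolding defect_def by (simp add: add algebra_simps)

lemma defect_add_left: "defect (x + u) y = defect x y + defect u y"
  unfolding defect_def by (simp add: add algebra_simps)

lemma defect_add_right: "defect x (y + v) = defect x y + defect x v"
  unfolding defect_def by (simp add: add algebra_simps)

lemma defect_sandwich_anticommute:
  "defect x y * w * (x*y - y*x) + (x*y - y*x) * w * defect x y = 0"
proof -
  have Dxy: "D (x*y) = defect x y + D x * y + x * D y"
    unfolding defect_def by simp
  have Dyx: "D (y*x) = - defect x y + D y * x + y * D x"
    using defect_skew[of x y] unfolding defect_def by (simp add: algebra_simps)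
  have "D (x*y*w*(y*x) + y*x*w*(x*y))
      = D(x*y)*w*(y*x) + x*y*D w*(y*x) + x*y*w*D(y*x) + D(y*x)*w*(x*y) + y*x*D w*(x*y) + y*x*w*D(x*y)"
    by (rule triple_linearized)
  moreover have "x*y*w*(y*x) + y*x*w*(x*y) = x*(y*w*y)*x + y*(x*w*x)*y"
    by (simp add: mult.assoc)
  moreover have "D (x*(y*w*y)*x + y*(x*w*x)*y) = D x*(y*w*y)*x + x*(D y*w*y + y*D w*y + y*w*D y)*x
      + x*(y*w*y)*D x + (D y*(x*w*x)*y + y*(D x*w*x + x*D w*x + x*w*D x)*y + y*(x*w*x)*D y)"
    by (simp add: add triple)
  ultimately have "D(x*y)*w*(y*x) + x*y*D w*(y*x) + x*y*w*D(y*x) + D(y*x)*w*(x*y) + y*x*D w*(x*y) + y*x*w*D(x*y)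
      = D x*(y*w*y)*x + x*(D y*w*y + y*D w*y + y*w*D y)*x + x*(y*w*y)*D x
        + (D y*(x*w*x)*y + y*(D x*w*x + x*D w*x + x*w*D x)*y + y*(x*w*x)*D y)"
    by simp
  then show ?thesis
    unfolding Dxy Dyx by (simp add: algebra_simps)
qed

lemma defect_sandwich_commutator_self: "defect x y * w * (x*y - y*x) = 0"
  using defect_sandwich_anticommute by (rule sandwich_anticommute_zero)

lemma defect_sandwich_commutator_left: "defect x y * w * (u*y - y*u) = 0"
proof (rule sandwich_cross_zero)
  show "(defect x y + defect u y) * w * ((x*y - y*x) + (u*y - y*u)) = 0" for w
    using defect_sandwich_commutator_self[of "x + u" y w]
    by (simp add: defect_add_left) (simp add: algebra_simps)
qed (rule defect_sandwich_commutator_self)+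

lemma defect_sandwich_commutator: "defect x y * w * (u*t - t*u) = 0"
proof (rule sandwich_cross_zero)
  show "(defect x y + defect x t) * w * ((u*y - y*u) + (u*t - t*u)) = 0" for w
    using defect_sandwich_commutator_left[of x "y + t" w u]
    by (simp add: defect_add_right) (simp add: algebra_simps)
qed (rule defect_sandwich_commutator_left)+

lemma defect_central: "defect x y * r = r * defect x y"
proof -
  let ?a = "defect x y"
  have "(?a*r - r*?a) * w * (?a*r - r*?a) = 0" for w
  proof -
    have "(?a*r - r*?a) * w * (?a*r - r*?a) = ?a * (r*w) * (?a*r - r*?a) - r * (?a * w * (?a*r - r*?a))"
      by (simp add: algebra_simps)
    then show ?thesis by (simp add: defect_sandwich_commutator)
  qed
  then have "?a*r - r*?a = 0" by (rule semiprimeD)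
  then show ?thesis by simp
qed

lemma defect_zero: "defect x y = 0"
proof (rule central_nilpotent_zero[OF defect_central[symmetric]])
  let ?a = "defect x y" and ?c = "x*y - y*x"
  have ann: "?a * (p*q - q*p) = 0" for p q
    using defect_sandwich_commutator[of x y 1 p q] by simp
  \<comment> \<open>Applying the Jordan identity to \<open>a c + c a = 0\<close> and multiplying by the central \<open>a\<close>
      kills every term except two copies of \<open>a\<^sup>2 D c\<close>.\<close>
  have "?a * ?c + ?c * ?a = 0"
    using ann[of x y] defect_central[of x y ?c] by simp
  from arg_cong[where f = D, OF this]
  have "?a * (D ?a * ?c + ?a * D ?c + D ?c * ?a + ?c * D ?a) = 0"
    by (simp add: jordan zero)
  moreover have "?a * (D ?a * ?c) = D ?a * (?a * ?c)"
    by (simp only: mult.assoc[symmetric] defect_central[of x y "D ?a"])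
  moreover have "?a * (?c * D ?a) = (?a * ?c) * D ?a"
    by (simp only: mult.assoc)
  moreover have "?a * (D ?c * ?a) = ?a * (?a * D ?c)"
    by (simp only: defect_central[of x y "D ?c", symmetric])
  ultimately have "?a * ?a * D ?c + ?a * ?a * D ?c = 0"
    by (simp add: distrib_left ann mult.assoc)
  then have aaDc: "?a * ?a * D ?c = 0" by (rule two_torsion_free)
  have twice: "?a + ?a = D ?c - (D x * y - y * D x) - (x * D y - D y * x)"
    using defect_skew[of x y] unfolding defect_def by (simp add: diff algebra_simps)
  have "?a * ?a * (?a + ?a) = ?a * ?a * D ?c - ?a * (?a * (D x * y - y * D x)) - ?a * (?a * (x * D y - D y * x))"
    unfolding twice by (simp add: algebra_simps)
  then have "?a * ?a * (?a + ?a) = 0"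
    using aaDc ann by simp
  then show "?a * ?a * ?a = 0"
    by (intro two_torsion_free[of "?a * ?a * ?a"]) (simp add: distrib_left)
qed

lemma derivation: "D (x * y) = D x * y + x * D y"
  using defect_zero[of x y] unfolding defect_def by (simp add: diff_diff_eq)

end

section \<open>Hyers' method for the functional equation\<close>

definition additivity_defect :: "('a::real_vector \<Rightarrow> 'b::real_vector) \<Rightarrow> 'a \<Rightarrow> 'a \<Rightarrow> 'b" where
  "additivity_defect f x y = f (2 *\<^sub>R x + y) + f (x + 2 *\<^sub>R y) - (f (3 *\<^sub>R x) + f (3 *\<^sub>R y))"

lemma doubling_error_eq_defects:
  fixes f :: "'a::real_vector \<Rightarrow> 'b::real_vector"
  assumes "f 0 = 0"
  shows "f (2 *\<^sub>R z) - 2 *\<^sub>R f z =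
    additivity_defect f ((1/3) *\<^sub>R z) ((-1/6) *\<^sub>R z) + additivity_defect f ((-1/3) *\<^sub>R z) ((1/6) *\<^sub>R z)
    - additivity_defect f ((2/3) *\<^sub>R z) ((-1/3) *\<^sub>R z)"
proof -
  \<comment> \<open>Each defect has the form \<open>- additivity_defect f (2 w) (- w) = f (6 w) - f (3 w) + f (- 3 w)\<close>,
      with \<open>w\<close> one of \<open>z/6\<close>, \<open>-z/6\<close>, \<open>z/3\<close>; the three expressions telescope.\<close>
  define F where "F r = f (r *\<^sub>R z)" for r
  have defect: "additivity_defect f (a *\<^sub>R z) (b *\<^sub>R z) = F (2*a + b) + F (a + 2*b) - (F (3*a) + F (3*b))" for a b
    unfolding additivity_defect_def F_def by (simp add: scaleR_add_left)
  have "F 0 = 0" by (simp add: F_def assms)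
  have "f (2 *\<^sub>R z) - 2 *\<^sub>R f z = F 2 - 2 *\<^sub>R F 1" by (simp add: F_def)
  then show ?thesis
    unfolding defect using \<open>F 0 = 0\<close> by (simp add: algebra_simps scaleR_2)
qed

lemma doubling_error_bound:
  fixes f :: "'a::real_vector \<Rightarrow> 'b::real_normed_vector"
  assumes "f 0 = 0" and defect: "\<And>x y. norm (additivity_defect f x y) \<le> \<phi> x y"
  shows "norm (f (2 *\<^sub>R z) - 2 *\<^sub>R f z) \<le>
    \<phi> ((1/3) *\<^sub>R z) ((-1/6) *\<^sub>R z) + \<phi> ((-1/3) *\<^sub>R z) ((1/6) *\<^sub>R z) + \<phi> ((2/3) *\<^sub>R z) ((-1/3) *\<^sub>R z)"
  unfolding doubling_error_eq_defects[of f z, OF \<open>f 0 = 0\<close>]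
  by (intro norm_triangle_le_diff norm_triangle_le add_mono defect)

lemma doubling_iterate_le:
  fixes \<phi> :: "'a::real_vector \<Rightarrow> 'a \<Rightarrow> real"
  assumes "\<And>x y. \<phi> (2 *\<^sub>R x) (2 *\<^sub>R y) \<le> c * \<phi> x y" and "c \<ge> 0"
  shows "\<phi> ((2 ^ k) *\<^sub>R x) ((2 ^ k) *\<^sub>R y) \<le> c ^ k * \<phi> x y"
proof (induction k)
  case (Suc k)
  have "\<phi> ((2 ^ Suc k) *\<^sub>R x) ((2 ^ Suc k) *\<^sub>R y) \<le> c * \<phi> ((2 ^ k) *\<^sub>R x) ((2 ^ k) *\<^sub>R y)"
    using assms(1)[of "(2 ^ k) *\<^sub>R x" "(2 ^ k) *\<^sub>R y"] by simp
  also have "\<dots> \<le> c * (c ^ k * \<phi> x y)"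
    using Suc \<open>c \<ge> 0\<close> by (rule mult_left_mono)
  finally show ?case by simp
qed simp

lemma doubling_sequence_convergent:
  fixes f :: "'a::real_vector \<Rightarrow> 'b::banach"
  assumes "f 0 = 0"
    and defect: "\<And>x y. norm (additivity_defect f x y) \<le> \<phi> x y"
    and scaling: "\<And>x y. \<phi> (2 *\<^sub>R x) (2 *\<^sub>R y) \<le> 2 * L * \<phi> x y"
    and "0 \<le> L" and "L < 1"
  shows "convergent (\<lambda>k. (1 / 2 ^ k) *\<^sub>R f ((2 ^ k) *\<^sub>R z))"
proof -
  define s where "s k = (1 / 2 ^ k) *\<^sub>R f ((2 ^ k) *\<^sub>R z)" for k :: nat
  define C where "C = \<phi> ((1/3) *\<^sub>R z) ((-1/6) *\<^sub>R z) + \<phi> ((-1/3) *\<^sub>R z) ((1/6) *\<^sub>R z)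
    + \<phi> ((2/3) *\<^sub>R z) ((-1/3) *\<^sub>R z)"
  have iter: "\<phi> ((2 ^ k) *\<^sub>R x) ((2 ^ k) *\<^sub>R y) \<le> (2 * L) ^ k * \<phi> x y" for k x y
    using scaling \<open>0 \<le> L\<close> by (intro doubling_iterate_le) auto
  have step: "norm (s (Suc k) - s k) \<le> C / 2 * L ^ k" for k
  proof -
    let ?w = "(2 ^ k) *\<^sub>R z"
    have "s (Suc k) - s k = (1 / 2 ^ Suc k) *\<^sub>R (f (2 *\<^sub>R ?w) - 2 *\<^sub>R f ?w)"
      unfolding s_def by (simp add: scaleR_diff_right)
    then have "norm (s (Suc k) - s k) = norm (f (2 *\<^sub>R ?w) - 2 *\<^sub>R f ?w) / 2 ^ Suc k"
      by simp
    also have "\<dots> \<le> (2 * L) ^ k * C / 2 ^ Suc k"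
    proof (rule divide_right_mono)
      have "norm (f (2 *\<^sub>R ?w) - 2 *\<^sub>R f ?w) \<le> \<phi> ((2 ^ k) *\<^sub>R ((1/3) *\<^sub>R z)) ((2 ^ k) *\<^sub>R ((-1/6) *\<^sub>R z))
          + \<phi> ((2 ^ k) *\<^sub>R ((-1/3) *\<^sub>R z)) ((2 ^ k) *\<^sub>R ((1/6) *\<^sub>R z))
          + \<phi> ((2 ^ k) *\<^sub>R ((2/3) *\<^sub>R z)) ((2 ^ k) *\<^sub>R ((-1/3) *\<^sub>R z))"
        using doubling_error_bound[OF \<open>f 0 = 0\<close> defect, of ?w] by (simp add: scaleR_scaleR mult.commute)
      also have "\<dots> \<le> (2 * L) ^ k * C"
        unfolding C_def distrib_left by (intro add_mono iter)
      finally show "norm (f (2 *\<^sub>R ?w) - 2 *\<^sub>R f ?w) \<le> (2 * L) ^ k * C" .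
    qed simp
    also have "\<dots> = C / 2 * L ^ k"
      by (simp add: power_mult_distrib field_simps)
    finally show ?thesis .
  qed
  have "summable (\<lambda>k. C / 2 * L ^ k)"
    using assms(4,5) by (intro summable_mult summable_geometric) auto
  then have "summable (\<lambda>k. s (Suc k) - s k)"
    by (rule summable_comparison_test'[where N = 0]) (rule step)
  then have "(\<lambda>n. s 0 + (\<Sum>k<n. s (Suc k) - s k)) \<longlonglongrightarrow> s 0 + (\<Sum>k. s (Suc k) - s k)"
    by (intro tendsto_add tendsto_const summable_LIMSEQ)
  then show ?thesis
    unfolding convergent_def s_def[symmetric] sum_lessThan_telescope by auto
qed

lemma additive_if_additivity_defect_zero:
  fixes g :: "'a::real_vector \<Rightarrow> 'b::real_vector"
  assumes zero: "g 0 = 0" and double: "\<And>x. g (2 *\<^sub>R x) = 2 *\<^sub>R g x"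
    and defect: "\<And>x y. additivity_defect g x y = 0"
  shows "Modules.additive g"
proof
  have eq: "g (2 *\<^sub>R x + y) + g (x + 2 *\<^sub>R y) = g (3 *\<^sub>R x) + g (3 *\<^sub>R y)" for x y
    using defect[of x y] unfolding additivity_defect_def by simp
  have triple: "g (3 *\<^sub>R x) = 3 *\<^sub>R g x" for x
    using eq[of x 0] scaleR_add_left[of 2 1 "g x"] by (simp add: zero double)
  have odd: "g (- x) = - g x" for x
  proof -
    let ?v = "g x + g (- x)"
    have "g x + g (- x) = 3 *\<^sub>R g x + 3 *\<^sub>R g (- x)"
      using eq[of x "- x"] unfolding triple by (simp add: scaleR_2)
    then have thrice: "?v = 3 *\<^sub>R ?v"
      unfolding scaleR_add_right .
    have "(3 - 1) *\<^sub>R ?v = 3 *\<^sub>R ?v - ?v"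
      by (simp only: scaleR_left_diff_distrib scaleR_one)
    also have "\<dots> = 0"
      unfolding thrice[symmetric] by simp
    finally show ?thesis by (simp add: eq_neg_iff_add_eq_0 add.commute)
  qed
  fix x y
  let ?t = "3 *\<^sub>R g (x + y)" and ?p = "3 *\<^sub>R g x" and ?q = "3 *\<^sub>R g y"
  have swap: "g (y - x) = - g (x - y)"
    using odd[of "x - y"] by simp
  have A: "g (2 *\<^sub>R x + y) + g (x - y) = ?t - ?q"
    using eq[of "x + y" "- y"] unfolding triple odd by (simp add: algebra_simps scaleR_2)
  have B: "g (x + 2 *\<^sub>R y) - g (x - y) = ?t - ?p"
    using eq[of "x + y" "- x"] unfolding triple odd by (simp add: swap algebra_simps scaleR_2)
  have "?t + ?t = (g (2 *\<^sub>R x + y) + g (x - y) + ?q) + (g (x + 2 *\<^sub>R y) - g (x - y) + ?p)"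
    unfolding A B by simp
  also have "\<dots> = (g (2 *\<^sub>R x + y) + g (x + 2 *\<^sub>R y)) + (?p + ?q)"
    by (simp add: algebra_simps)
  also have "\<dots> = (?p + ?q) + (?p + ?q)"
    using eq[of x y] unfolding triple by simp
  finally have "2 *\<^sub>R ?t = 2 *\<^sub>R (?p + ?q)"
    unfolding scaleR_2 .
  then show "g (x + y) = g x + g y"
    by (simp flip: scaleR_add_right)
qed

section \<open>Complex homogeneity from the arc\<close>

lemma scaleC_scaleR: "c *\<^sub>C (r *\<^sub>R x) = r *\<^sub>R (c *\<^sub>C x)"
  for x :: "'a::complex_banach_algebra_1"
  by (metis mult.commute scaleC_of_real scaleC_scaleC)

lemma scaleC_numeral: "numeral n *\<^sub>C x = numeral n *\<^sub>R x"
  for x :: "'a::complex_banach_algebra_1"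
  using scaleC_of_real[of "numeral n" x] by simp

lemma scaleC_numeral_power: "(numeral n ^ k) *\<^sub>C x = (numeral n ^ k) *\<^sub>R x"
  for x :: "'a::complex_banach_algebra_1"
  using scaleC_of_real[of "numeral n ^ k" x] by simp

lemma bounded_linear_scaleC: "bounded_linear (\<lambda>x::'a::complex_banach_algebra_1. c *\<^sub>C x)"
  by (rule bounded_linear_intro[where K = "cmod c"])
    (simp_all add: scaleC_add_right scaleC_scaleR norm_scaleC mult.commute)

lemma one_in_arcT: "n0 > 0 \<Longrightarrow> 1 \<in> arcT n0"
  unfolding arcT_def by (auto intro!: exI[of _ 0])

lemma cis_root_in_arcT:
  assumes "n0 > 0" and "0 \<le> t"
  obtains N where "N > 0" and "cis (t / real N) \<in> arcT n0" and "cis t = cis (t / real N) ^ N"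
proof -
  define N where "N = n0 * (nat \<lceil>t\<rceil> + 1)"
  have "N > 0" using \<open>n0 > 0\<close> by (simp add: N_def)
  have "real n0 * t \<le> real n0 * (real (nat \<lceil>t\<rceil>) + 1)"
    using \<open>0 \<le> t\<close> by (intro mult_left_mono) linarith+
  also have "\<dots> = real N" by (simp add: N_def algebra_simps)
  also have "\<dots> \<le> 2 * pi * real N" using \<open>N > 0\<close> pi_gt3 by simp
  finally have "cis (t / real N) \<in> arcT n0"
    unfolding arcT_def using \<open>0 \<le> t\<close> \<open>N > 0\<close> \<open>n0 > 0\<close> by (auto simp: field_simps)
  moreover have "cis t = cis (t / real N) ^ N"
    using \<open>N > 0\<close> by (simp add: Complex.DeMoivre)
  ultimately show ?thesis using \<open>N > 0\<close> that by blast
qed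

lemma additive_scaleR_of_nat:
  fixes g :: "'a::real_vector \<Rightarrow> 'b::real_vector"
  assumes "Modules.additive g"
  shows "g (real m *\<^sub>R x) = real m *\<^sub>R g x"
  by (induction m) (simp_all add: Modules.additive.zero[OF assms] Modules.additive.add[OF assms] scaleR_add_left)

lemma additive_scaleR_half:
  fixes g :: "'a::real_vector \<Rightarrow> 'b::real_vector"
  assumes "Modules.additive g"
  shows "g ((1/2) *\<^sub>R x) = (1/2) *\<^sub>R g x"
proof -
  have "g x = g ((1/2) *\<^sub>R x + (1/2) *\<^sub>R x)" by (simp flip: scaleR_add_left)
  also have "\<dots> = 2 *\<^sub>R g ((1/2) *\<^sub>R x)" by (simp add: Modules.additive.add[OF assms] scaleR_2)
  finally show ?thesis by simp
qed

lemma scaleC_commute_power: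
  fixes g :: "'a::complex_banach_algebra_1 \<Rightarrow> 'b::complex_banach_algebra_1"
  assumes "\<And>z. g (a *\<^sub>C z) = a *\<^sub>C g z"
  shows "g ((a ^ n) *\<^sub>C z) = (a ^ n) *\<^sub>C g z"
  by (induction n arbitrary: z) (simp_all add: scaleC_one assms flip: scaleC_scaleC)

lemma scaleC_commute_cis:
  fixes g :: "'a::complex_banach_algebra_1 \<Rightarrow> 'b::complex_banach_algebra_1"
  assumes "n0 > 0" and arc: "\<And>\<mu> z. \<mu> \<in> arcT n0 \<Longrightarrow> g (\<mu> *\<^sub>C z) = \<mu> *\<^sub>C g z"
  shows "g (cis t *\<^sub>C z) = cis t *\<^sub>C g z"
proof -
  have nonneg: "g (cis t *\<^sub>C z) = cis t *\<^sub>C g z" if "0 \<le> t" for t z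
  proof -
    obtain N where "cis (t / real N) \<in> arcT n0" and "cis t = cis (t / real N) ^ N"
      using cis_root_in_arcT[OF \<open>n0 > 0\<close> \<open>0 \<le> t\<close>] .
    then show ?thesis using scaleC_commute_power[where a = "cis (t / real N)"] arc by metis
  qed
  show ?thesis
  proof (cases "0 \<le> t")
    case False
    have "g z = g (cis (- t) *\<^sub>C (cis t *\<^sub>C z))"
      by (simp add: scaleC_scaleC cis_mult scaleC_one)
    also have "\<dots> = cis (- t) *\<^sub>C g (cis t *\<^sub>C z)"
      using False by (intro nonneg) simp
    finally have "cis t *\<^sub>C g z = cis t *\<^sub>C (cis (- t) *\<^sub>C g (cis t *\<^sub>C z))" by simp
    then show ?thesis by (simp add: scaleC_scaleC cis_mult scaleC_one)
  qed (rule nonneg)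
qed

lemma complex_homogeneous_if_arc_homogeneous:
  fixes g :: "'a::complex_banach_algebra_1 \<Rightarrow> 'b::complex_banach_algebra_1"
  assumes "Modules.additive g" and "n0 > 0"
    and arc: "\<And>\<mu> z. \<mu> \<in> arcT n0 \<Longrightarrow> g (\<mu> *\<^sub>C z) = \<mu> *\<^sub>C g z"
  shows "g (c *\<^sub>C z) = c *\<^sub>C g z"
proof -
  define m where "m = nat \<lceil>cmod c\<rceil> + 1"
  have "m > 0" by (simp add: m_def)
  define l where "l = c / of_nat m"
  have c_eq: "c = of_nat m * l"
    using \<open>m > 0\<close> by (simp add: l_def)
  have "cmod c \<le> real m"
    unfolding m_def by linarith
  then have "cmod l \<le> 1"
    using \<open>m > 0\<close> by (simp add: l_def norm_divide)
  obtain r a where ra: "l = rcis r a" using rcis_Ex by blast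
  with \<open>cmod l \<le> 1\<close> have "\<bar>r\<bar> \<le> 1" by simp
  \<comment> \<open>\<open>l\<close> lies in the unit disc, so it is the mean of two points of the unit circle.\<close>
  define \<beta> where "\<beta> = arccos r"
  have "cos \<beta> = r" using \<open>\<bar>r\<bar> \<le> 1\<close> by (simp add: \<beta>_def)
  then have l_eq: "l *\<^sub>C w = (1/2) *\<^sub>R (cis (a + \<beta>) *\<^sub>C w + cis (a - \<beta>) *\<^sub>C w)" for w :: "'c::complex_banach_algebra_1"
  proof -
    have "l = complex_of_real (1/2) * (cis (a + \<beta>) + cis (a - \<beta>))"
      unfolding ra rcis_def using \<open>cos \<beta> = r\<close>
      by (simp add: complex_eq_iff cos_add cos_diff sin_add sin_diff)
    then show ?thesis by (simp only: scaleC_scaleC[symmetric] scaleC_of_real scaleC_add_left)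
  qed
  have "g (l *\<^sub>C z) = g ((1/2) *\<^sub>R (cis (a + \<beta>) *\<^sub>C z + cis (a - \<beta>) *\<^sub>C z))"
    by (simp only: l_eq)
  also have "\<dots> = (1/2) *\<^sub>R (cis (a + \<beta>) *\<^sub>C g z + cis (a - \<beta>) *\<^sub>C g z)"
    by (simp only: additive_scaleR_half[OF assms(1)] Modules.additive.add[OF assms(1)]
        scaleC_commute_cis[OF \<open>n0 > 0\<close> arc])
  also have "\<dots> = l *\<^sub>C g z"
    by (simp only: l_eq)
  finally have unit_disc: "g (l *\<^sub>C z) = l *\<^sub>C g z" .
  have c_scale: "c *\<^sub>C w = real m *\<^sub>R (l *\<^sub>C w)" for w :: "'c::complex_banach_algebra_1"
    unfolding c_eq by (simp add: scaleC_scaleC[symmetric] scaleC_of_real[symmetric])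
  have "g (c *\<^sub>C z) = g (real m *\<^sub>R (l *\<^sub>C z))" by (simp only: c_scale)
  also have "\<dots> = real m *\<^sub>R (l *\<^sub>C g z)"
    by (simp only: additive_scaleR_of_nat[OF assms(1)] unit_disc)
  also have "\<dots> = c *\<^sub>C g z" by (simp only: c_scale)
  finally show ?thesis .
qed

section \<open>Stability of derivations\<close>

locale approximate_derivation =
  fixes f :: "'a::complex_banach_algebra_1 \<Rightarrow> 'a"
    and \<phi> \<psi> :: "'a \<Rightarrow> 'a \<Rightarrow> real"
    and n0 :: nat and L :: real
  assumes n0_pos: "n0 > 0"
    and f_zero: "f 0 = 0"
    and triple_defect: "\<And>x y. norm (f (x * y * x) - f x * y * x - x * f y * x - x * y * f x) \<le> \<psi> x y"
    and arc_defect: "\<And>x y \<mu>. \<mu> \<in> arcT n0 \<Longrightarrow>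
           norm (f ((2 * \<mu>) *\<^sub>C x + \<mu> *\<^sub>C y) + f (\<mu> *\<^sub>C x + (2 * \<mu>) *\<^sub>C y)
                 - \<mu> *\<^sub>C (f (3 *\<^sub>C x) + f (3 *\<^sub>C y))) \<le> \<phi> x y"
    and L_nonneg: "0 \<le> L" and L_less_1: "L < 1"
    and \<phi>_doubling: "\<And>x y. \<phi> (2 *\<^sub>C x) (2 *\<^sub>C y) / 2 \<le> L * \<phi> x y"
    and \<psi>_decay_8: "\<And>x y. (\<lambda>k. \<psi> ((2 ^ k) *\<^sub>C x) ((2 ^ k) *\<^sub>C y) / 8 ^ k) \<longlonglongrightarrow> 0"
    and \<psi>_decay_4: "\<And>x y. (\<lambda>k. \<psi> ((2 ^ k) *\<^sub>C x) y / 4 ^ k) \<longlonglongrightarrow> 0"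
begin

definition approx :: "nat \<Rightarrow> 'a \<Rightarrow> 'a" where
  "approx n x = (1 / 2 ^ n) *\<^sub>R f ((2 ^ n) *\<^sub>R x)"

definition D :: "'a \<Rightarrow> 'a" where
  "D x = lim (\<lambda>n. approx n x)"

lemma additivity_defect_bound: "norm (additivity_defect f x y) \<le> \<phi> x y"
  using arc_defect[OF one_in_arcT[OF n0_pos], of x y]
  by (simp add: additivity_defect_def scaleC_one scaleC_numeral)

lemma \<phi>_doubling_scaleR: "\<phi> (2 *\<^sub>R x) (2 *\<^sub>R y) \<le> 2 * L * \<phi> x y"
  using \<phi>_doubling[of x y] by (simp add: scaleC_numeral)

lemma approx_LIMSEQ: "(\<lambda>n. approx n x) \<longlonglongrightarrow> D x"
proof -
  have "convergent (\<lambda>n. approx n x)"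
    unfolding approx_def
    by (rule doubling_sequence_convergent[OF f_zero additivity_defect_bound \<phi>_doubling_scaleR L_nonneg L_less_1])
  then show ?thesis by (simp add: D_def convergent_LIMSEQ_iff)
qed

lemma approx_multiple_LIMSEQ: "m > 0 \<Longrightarrow> (\<lambda>k. approx (m * k) x) \<longlonglongrightarrow> D x"
  using LIMSEQ_subseq_LIMSEQ[OF approx_LIMSEQ, of "\<lambda>k. m * k"]
  by (simp add: strict_mono_def o_def)

lemma D_arc_equation:
  assumes "\<mu> \<in> arcT n0"
  shows "D ((2 * \<mu>) *\<^sub>C x + \<mu> *\<^sub>C y) + D (\<mu> *\<^sub>C x + (2 * \<mu>) *\<^sub>C y) - \<mu> *\<^sub>C (D (3 *\<^sub>C x) + D (3 *\<^sub>C y)) = 0"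
proof -
  define E where "E n = approx n ((2 * \<mu>) *\<^sub>C x + \<mu> *\<^sub>C y) + approx n (\<mu> *\<^sub>C x + (2 * \<mu>) *\<^sub>C y)
    - \<mu> *\<^sub>C (approx n (3 *\<^sub>C x) + approx n (3 *\<^sub>C y))" for n
  have "E \<longlonglongrightarrow> D ((2 * \<mu>) *\<^sub>C x + \<mu> *\<^sub>C y) + D (\<mu> *\<^sub>C x + (2 * \<mu>) *\<^sub>C y) - \<mu> *\<^sub>C (D (3 *\<^sub>C x) + D (3 *\<^sub>C y))"
    unfolding E_def
    by (intro tendsto_diff tendsto_add approx_LIMSEQ bounded_linear.tendsto[OF bounded_linear_scaleC])
  moreover have "E \<longlonglongrightarrow> 0"
  proof (rule Lim_null_comparison)
    show "(\<lambda>n. L ^ n * \<phi> x y) \<longlonglongrightarrow> 0"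
      using L_nonneg L_less_1 by (intro tendsto_mult_left_zero LIMSEQ_power_zero) auto
    have "norm (E n) \<le> L ^ n * \<phi> x y" for n
    proof -
      let ?x = "(2 ^ n) *\<^sub>R x" and ?y = "(2 ^ n) *\<^sub>R y"
      have "E n = (1 / 2 ^ n) *\<^sub>R (f ((2 * \<mu>) *\<^sub>C ?x + \<mu> *\<^sub>C ?y) + f (\<mu> *\<^sub>C ?x + (2 * \<mu>) *\<^sub>C ?y)
                   - \<mu> *\<^sub>C (f (3 *\<^sub>C ?x) + f (3 *\<^sub>C ?y)))"
        unfolding E_def approx_def
        by (simp add: scaleC_scaleR scaleR_add_right scaleR_diff_right scaleC_add_right)
      then have "norm (E n) \<le> \<phi> ?x ?y / 2 ^ n"
        using arc_defect[OF assms, of ?x ?y] by (simp add: divide_right_mono)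
      also have "\<dots> \<le> (2 * L) ^ n * \<phi> x y / 2 ^ n"
        using \<phi>_doubling_scaleR L_nonneg by (intro divide_right_mono doubling_iterate_le) auto
      finally show ?thesis by (simp add: power_mult_distrib)
    qed
    then show "\<forall>\<^sub>F n in sequentially. norm (E n) \<le> L ^ n * \<phi> x y" by simp
  qed
  ultimately show ?thesis by (rule LIMSEQ_unique)
qed

lemma D_zero: "D 0 = 0"
  using LIMSEQ_unique[OF approx_LIMSEQ[of 0]] by (simp add: approx_def f_zero)

lemma D_double: "D (2 *\<^sub>R x) = 2 *\<^sub>R D x"
proof -
  have "(\<lambda>n. approx n (2 *\<^sub>R x)) = (\<lambda>n. 2 *\<^sub>R approx (Suc n) x)"
    by (simp add: approx_def mult.commute)
  moreover have "(\<lambda>n. 2 *\<^sub>R approx (Suc n) x) \<longlonglongrightarrow> 2 *\<^sub>R D x"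
    by (intro tendsto_scaleR tendsto_const LIMSEQ_Suc approx_LIMSEQ)
  ultimately show ?thesis
    using LIMSEQ_unique[OF approx_LIMSEQ[of "2 *\<^sub>R x"]] by simp
qed

lemma D_additive: "Modules.additive D"
proof (rule additive_if_additivity_defect_zero[OF D_zero D_double])
  show "additivity_defect D x y = 0" for x y
    using D_arc_equation[OF one_in_arcT[OF n0_pos], of x y]
    by (simp add: additivity_defect_def scaleC_one scaleC_numeral)
qed

lemma D_arc_homogeneous:
  assumes "\<mu> \<in> arcT n0"
  shows "D (\<mu> *\<^sub>C z) = \<mu> *\<^sub>C D z"
proof -
  let ?w = "(1/3) *\<^sub>R z"
  have "(2 * \<mu>) *\<^sub>C ?w + \<mu> *\<^sub>C ?w = (3 * \<mu>) *\<^sub>C ?w"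
    by (simp add: scaleC_add_left[symmetric])
  also have "\<dots> = (1/3) *\<^sub>R (3 *\<^sub>C (\<mu> *\<^sub>C z))"
    by (simp add: scaleC_scaleR scaleC_scaleC)
  also have "\<dots> = \<mu> *\<^sub>C z"
    by (simp add: scaleC_numeral)
  finally have "(2 * \<mu>) *\<^sub>C ?w + \<mu> *\<^sub>C ?w = \<mu> *\<^sub>C z" .
  moreover have "3 *\<^sub>C ?w = z" by (simp add: scaleC_numeral)
  ultimately have "D (\<mu> *\<^sub>C z) + D (\<mu> *\<^sub>C z) = \<mu> *\<^sub>C (D z + D z)"
    using D_arc_equation[OF assms, of ?w ?w] by (simp add: add.commute)
  then have "2 *\<^sub>R D (\<mu> *\<^sub>C z) = 2 *\<^sub>R (\<mu> *\<^sub>C D z)"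
    by (simp add: scaleC_add_right scaleR_2)
  then show ?thesis by simp
qed

lemma approx_triple_defect:
  "approx ((2 + j) * k) (x * y * x) - approx k x * y * x - x * approx (j * k) y * x - x * y * approx k x
   = (1 / 2 ^ ((2 + j) * k)) *\<^sub>R
       (f (((2 ^ k) *\<^sub>R x) * ((2 ^ (j * k)) *\<^sub>R y) * ((2 ^ k) *\<^sub>R x))
        - f ((2 ^ k) *\<^sub>R x) * ((2 ^ (j * k)) *\<^sub>R y) * ((2 ^ k) *\<^sub>R x)
        - ((2 ^ k) *\<^sub>R x) * f ((2 ^ (j * k)) *\<^sub>R y) * ((2 ^ k) *\<^sub>R x)
        - ((2 ^ k) *\<^sub>R x) * ((2 ^ (j * k)) *\<^sub>R y) * f ((2 ^ k) *\<^sub>R x))"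
  unfolding approx_def
  by (simp add: scaleR_diff_right power_add add_mult_distrib power_mult_distrib field_simps)

text \<open>With \<open>j = 1\<close> this uses the \<open>8^k\<close> decay of \<open>\<psi>\<close>; with \<open>j = 0\<close>, where \<open>approx 0 = f\<close>,
  the \<open>4^k\<close> decay.\<close>

lemma D_triple_limit:
  assumes Y: "(\<lambda>k. approx (j * k) y) \<longlonglongrightarrow> Y"
    and decay: "(\<lambda>k. \<psi> ((2 ^ k) *\<^sub>R x) ((2 ^ (j * k)) *\<^sub>R y) / 2 ^ ((2 + j) * k)) \<longlonglongrightarrow> 0"
  shows "D (x * y * x) = D x * y * x + x * Y * x + x * y * D x"
proof -
  define E where "E k = approx ((2 + j) * k) (x * y * x) - approx k x * y * x
    - x * approx (j * k) y * x - x * y * approx k x" for k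
  have "E \<longlonglongrightarrow> D (x * y * x) - D x * y * x - x * Y * x - x * y * D x"
    unfolding E_def
    by (intro tendsto_diff tendsto_mult tendsto_const approx_LIMSEQ approx_multiple_LIMSEQ Y) simp
  moreover have "E \<longlonglongrightarrow> 0"
  proof (rule Lim_null_comparison[OF _ decay])
    have "norm (E k) \<le> \<psi> ((2 ^ k) *\<^sub>R x) ((2 ^ (j * k)) *\<^sub>R y) / 2 ^ ((2 + j) * k)" for k
    proof -
      let ?X = "(2 ^ k) *\<^sub>R x" and ?Y = "(2 ^ (j * k)) *\<^sub>R y"
      have "norm (E k) = norm (f (?X * ?Y * ?X) - f ?X * ?Y * ?X - ?X * f ?Y * ?X - ?X * ?Y * f ?X)
          / 2 ^ ((2 + j) * k)"
        unfolding E_def approx_triple_defect norm_scaleR by simp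
      also have "\<dots> \<le> \<psi> ?X ?Y / 2 ^ ((2 + j) * k)"
        by (rule divide_right_mono[OF triple_defect]) simp
      finally show ?thesis .
    qed
    then show "\<forall>\<^sub>F k in sequentially. norm (E k) \<le> \<psi> ((2 ^ k) *\<^sub>R x) ((2 ^ (j * k)) *\<^sub>R y) / 2 ^ ((2 + j) * k)"
      by simp
  qed
  ultimately have "D (x * y * x) - D x * y * x - x * Y * x - x * y * D x = 0"
    by (rule LIMSEQ_unique)
  then show ?thesis by (simp add: diff_diff_eq)
qed

lemma D_triple: "D (x * y * x) = D x * y * x + x * D y * x + x * y * D x"
proof (rule D_triple_limit)
  show "(\<lambda>k. approx (1 * k) y) \<longlonglongrightarrow> D y" by (simp add: approx_LIMSEQ)
  show "(\<lambda>k. \<psi> ((2 ^ k) *\<^sub>R x) ((2 ^ (1 * k)) *\<^sub>R y) / 2 ^ ((2 + 1) * k)) \<longlonglongrightarrow> 0"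
    using \<psi>_decay_8[of x y] by (simp add: scaleC_numeral_power power_mult)
qed

lemma D_triple_mixed: "D (x * y * x) = D x * y * x + x * f y * x + x * y * D x"
proof (rule D_triple_limit)
  show "(\<lambda>k. approx (0 * k) y) \<longlonglongrightarrow> f y" by (simp add: approx_def)
  show "(\<lambda>k. \<psi> ((2 ^ k) *\<^sub>R x) ((2 ^ (0 * k)) *\<^sub>R y) / 2 ^ ((2 + 0) * k)) \<longlonglongrightarrow> 0"
    using \<psi>_decay_4[of x y] by (simp add: scaleC_numeral_power power_mult)
qed

lemma f_eq_D: "f = D"
proof
  show "f y = D y" for y
    using D_triple[of 1 y] D_triple_mixed[of 1 y] by simp
qed

end

theorem theorem2p10:
  fixes f :: "'a::complex_banach_algebra_1 \<Rightarrow> 'a"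
    and \<phi> \<psi> :: "'a \<Rightarrow> 'a \<Rightarrow> real"
    and n0 :: nat and L :: real
  assumes "n0 > 0"
    and "semiprime TYPE('a)"
    and "\<And>x y. \<phi> x y \<ge> 0" and "\<And>x y. \<psi> x y \<ge> 0"
    and "f 0 = 0"
    and "\<And>x y. norm (f (x * y * x) - f x * y * x - x * f y * x - x * y * f x) \<le> \<psi> x y"
    and "\<And>x y \<mu>. \<mu> \<in> arcT n0 \<Longrightarrow>
           norm (f ((2 * \<mu>) *\<^sub>C x + \<mu> *\<^sub>C y) + f (\<mu> *\<^sub>C x + (2 * \<mu>) *\<^sub>C y)
                 - \<mu> *\<^sub>C (f (3 *\<^sub>C x) + f (3 *\<^sub>C y))) \<le> \<phi> x y"
    and "0 < L" and "L < 1"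
    and "\<And>x y. \<phi> (2 *\<^sub>C x) (2 *\<^sub>C y) / 2 \<le> L * \<phi> x y"
    and "\<And>x y. (\<lambda>k. \<psi> ((2 ^ k) *\<^sub>C x) ((2 ^ k) *\<^sub>C y) / 8 ^ k) \<longlonglongrightarrow> 0"
    and "\<And>x y. (\<lambda>k. \<psi> ((2 ^ k) *\<^sub>C x) y / 4 ^ k) \<longlonglongrightarrow> 0"
  shows "linear_derivation f"
proof -
  interpret approximate_derivation f \<phi> \<psi> n0 L
    using assms by unfold_locales auto
  interpret jordan_triple_derivation D
  proof (rule jordan_triple_derivation.intro[OF D_additive], unfold_locales)
    show "semiprime TYPE('a)" by (fact assms(2))
    show "x = 0" if "x + x = 0" for x :: 'a
      using that by (simp flip: scaleR_2)
    show "D (x * y * x) = D x * y * x + x * D y * x + x * y * D x" for x y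
      by (rule D_triple)
  qed
  have "linear_derivation D"
    unfolding linear_derivation_def
    using add derivation complex_homogeneous_if_arc_homogeneous[OF D_additive n0_pos D_arc_homogeneous]
    by blast
  then show ?thesis by (subst f_eq_D)
qed

end
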